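(* Every solution of $x_{n+1}=\sum_{j=0}^{k-1}a_jx_{n-j}$ converges to $0$ (equivalently, all eigenvalues of $J_0$ lie in the open unit disk) if and only if there exists $m\in\mathbb{N}=\{0,1,2,\dots\}$ with $\|p_m\|_{\ell_1}<2$, i.e. $\sum_{j=0}^{k-1}|b_{m,j}|<1$.
   Context: Let $k\ge 2$, $a_0,\dots,a_{k-1}\in\mathbb{R}$, $a_0\ne0$. $J_0$ is the $k\times k$ companion matrix with first row $(a_0,\dots,a_{k-1})$, ones at positions $(i+1,i)$, zeros elsewhere. Define $b_{0,j}=a_j$ ($0\le j\le k-1$) and for $m\ge0$: $b_{m+1,j}=a_jb_{m,0}+b_{m,j+1}$ ($0\le j\le k-2$), $b_{m+1,k-1}=a_{k-1}b_{m,0}$ (equivalently, $[b_{m,0},\dots,b_{m,k-1}]^t=(J_0^t)^m[a_0,\dots,a_{k-1}]^t$). Let $p_m(x)=x^{k+m}-\sum_{j=0}^{k-1}b_{m,j}x^{k-j-1}$. For a polynomial $p$, $\|p\|_{\ell_1}$ is the sum of the absolute values of its coefficients. *)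

theory Defs
  imports "HOL-Analysis.Analysis" "HOL-Computational_Algebra.Polynomial"
begin

text \<open>Coefficients b_{m,j}, for 0 <= j <= k-1 (values for j >= k are irrelevant).\<close>
primrec bcoef :: "nat \<Rightarrow> (nat \<Rightarrow> real) \<Rightarrow> nat \<Rightarrow> nat \<Rightarrow> real" where
  "bcoef k a 0 j = a j"
| "bcoef k a (Suc m) j =
     (if j < k - 1 then a j * bcoef k a m 0 + bcoef k a m (j + 1)
      else a (k - 1) * bcoef k a m 0)"

definition pm :: "nat \<Rightarrow> (nat \<Rightarrow> real) \<Rightarrow> nat \<Rightarrow> real poly" where
  "pm k a m = monom 1 (k + m) - (\<Sum>j<k. monom (bcoef k a m j) (k - j - 1))"

definition l1_norm_poly :: "real poly \<Rightarrow> real" where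
  "l1_norm_poly p = (\<Sum>i\<le>degree p. \<bar>coeff p i\<bar>)"

definition is_solution :: "nat \<Rightarrow> (nat \<Rightarrow> real) \<Rightarrow> (nat \<Rightarrow> real) \<Rightarrow> bool" where
  "is_solution k a x \<longleftrightarrow> (\<forall>n. x (n + k) = (\<Sum>j<k. a j * x (n + k - 1 - j)))"

end

theory Submission
  imports Defs
begin

text \<open>
  Unrolling the recurrence m + 1 times expresses every term as the combination
  \<open>x (n + m + 1) = (\<Sum>j<k. b\<^sub>m\<^sub>,\<^sub>j * x (n - j))\<close> of the k terms just before a gap of length m.
  If \<open>\<Sum>j<k. \<bar>b\<^sub>m\<^sub>,\<^sub>j\<bar> < 1\<close>, each window of m + k consecutive terms is dominated by this
  factor times the previous window, so solutions decay geometrically. Conversely, the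
  solution started from the j-th unit vector reads off the sequence \<open>m \<mapsto> b\<^sub>m\<^sub>,\<^sub>j\<close>; if all
  solutions tend to 0, so do all \<open>b\<^sub>m\<^sub>,\<^sub>j\<close>, and eventually their absolute sum drops below 1.
\<close>

function recurrence_solution ::
    "nat \<Rightarrow> (nat \<Rightarrow> real) \<Rightarrow> (nat \<Rightarrow> real) \<Rightarrow> nat \<Rightarrow> real" where
  "recurrence_solution k a ini n =
     (if n < k then ini n else (\<Sum>j<k. a j * recurrence_solution k a ini (n - 1 - j)))"
  by auto
termination by (relation "Wellfounded.measure (\<lambda>(k, a, ini, n). n)") auto

declare recurrence_solution.simps [simp del]

lemma is_solution_recurrence_solution: "is_solution k a (recurrence_solution k a ini)"
  unfolding is_solution_def by (subst recurrence_solution.simps) simp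

lemma recurrence_solution_initial: "n < k \<Longrightarrow> recurrence_solution k a ini n = ini n"
  by (subst recurrence_solution.simps) simp

lemma is_solutionD:
  assumes "is_solution k a x" "k \<ge> 1" "n \<ge> k - 1"
  shows "x (Suc n) = (\<Sum>j<k. a j * x (n - j))"
proof -
  have "x ((n + 1 - k) + k) = (\<Sum>j<k. a j * x ((n + 1 - k) + k - 1 - j))"
    using assms(1) unfolding is_solution_def by blast
  moreover have "(n + 1 - k) + k = Suc n" "\<And>j. (n + 1 - k) + k - 1 - j = n - j"
    using assms(2,3) by simp_all
  ultimately show ?thesis by simp
qed

lemma is_solution_bcoef:
  assumes "is_solution k a x" "k \<ge> 1" "n \<ge> k - 1"
  shows "x (n + m + 1) = (\<Sum>j<k. bcoef k a m j * x (n - j))"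
  using assms(3)
proof (induction m arbitrary: n)
  case 0
  then show ?case using is_solutionD[OF assms(1,2)] by simp
next
  case (Suc m)
  obtain k' where k': "k = Suc k'" using assms(2) by (cases k) auto
  have x_Suc: "x (Suc n) = (\<Sum>j<k. a j * x (n - j))"
    using is_solutionD[OF assms(1,2) Suc.prems] .
  have "x (n + Suc m + 1) = (\<Sum>j<k. bcoef k a m j * x (Suc n - j))"
    using Suc.IH[of "Suc n"] Suc.prems by simp
  also have "\<dots> = bcoef k a m 0 * x (Suc n) + (\<Sum>j<k'. bcoef k a m (Suc j) * x (n - j))"
    unfolding k' sum.lessThan_Suc_shift by simp
  also have "\<dots> = (\<Sum>j<k. bcoef k a m 0 * a j * x (n - j))
                 + (\<Sum>j<k'. bcoef k a m (Suc j) * x (n - j))"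
    unfolding x_Suc sum_distrib_left by (simp add: mult.assoc)
  also have "\<dots> = (\<Sum>j<k'. (a j * bcoef k a m 0 + bcoef k a m (j + 1)) * x (n - j))
                 + a k' * bcoef k a m 0 * x (n - k')"
    unfolding k' sum.lessThan_Suc by (simp add: algebra_simps sum.distrib)
  also have "\<dots> = (\<Sum>j<k. bcoef k a (Suc m) j * x (n - j))"
    unfolding k' sum.lessThan_Suc by (simp add: k' mult.commute)
  finally show ?case .
qed

lemma l1_norm_poly_pm:
  assumes "k \<ge> 1"
  shows "l1_norm_poly (pm k a m) = 1 + (\<Sum>j<k. \<bar>bcoef k a m j\<bar>)"
proof -
  let ?p = "pm k a m"
  have coeff_p: "coeff ?p i = (if i = k + m then 1 else 0)
                   - (\<Sum>j<k. if k - j - 1 = i then bcoef k a m j else 0)" for i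
    unfolding pm_def by (simp add: coeff_sum coeff_monom)
  have high: "coeff ?p i = 0" if "i > k + m" for i
    unfolding coeff_p using that by (auto intro!: sum.neutral)
  have lead: "coeff ?p (k + m) = 1"
    unfolding coeff_p using assms by (auto intro!: sum.neutral)
  have gap: "coeff ?p i = 0" if "k \<le> i" "i < k + m" for i
    unfolding coeff_p using that by (auto intro!: sum.neutral)
  have low: "coeff ?p i = - bcoef k a m (k - 1 - i)" if "i < k" for i
  proof -
    have "(\<Sum>j<k. if k - j - 1 = i then bcoef k a m j else 0) = (\<Sum>j\<in>{k - 1 - i}. bcoef k a m j)"
      using that by (intro sum.mono_neutral_cong_right) auto
    then show ?thesis unfolding coeff_p using that by simp
  qed
  have "degree ?p = k + m"
    by (rule antisym) (auto intro!: degree_le le_degree simp: high lead)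
  moreover have "{..k + m} = {..<k} \<union> ({k..<k + m} \<union> {k + m})" by auto
  ultimately have "l1_norm_poly ?p = (\<Sum>i\<in>{..<k} \<union> ({k..<k + m} \<union> {k + m}). \<bar>coeff ?p i\<bar>)"
    unfolding l1_norm_poly_def by simp
  also have "\<dots> = (\<Sum>i<k. \<bar>coeff ?p i\<bar>) + ((\<Sum>i\<in>{k..<k + m}. \<bar>coeff ?p i\<bar>) + 1)"
    by (subst sum.union_disjoint; auto simp: lead)+
  also have "(\<Sum>i\<in>{k..<k + m}. \<bar>coeff ?p i\<bar>) = 0"
    by (auto intro!: sum.neutral simp: gap)
  also have "(\<Sum>i<k. \<bar>coeff ?p i\<bar>) = (\<Sum>i<k. \<bar>bcoef k a m (k - Suc i)\<bar>)"
    by (intro sum.cong) (auto simp: low)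
  also have "\<dots> = (\<Sum>j<k. \<bar>bcoef k a m j\<bar>)"
    by (rule sum.nat_diff_reindex)
  finally show ?thesis by simp
qed

lemma tendsto_zero_if_window_contraction:
  fixes x :: "nat \<Rightarrow> real"
  assumes "0 \<le> c" "c < 1" "L > 0"
    and contraction: "\<And>s B. L \<le> s \<Longrightarrow> (\<And>t. s - L \<le> t \<Longrightarrow> t < s \<Longrightarrow> \<bar>x t\<bar> \<le> B) \<Longrightarrow> \<bar>x s\<bar> \<le> c * B"
  shows "x \<longlonglongrightarrow> 0"
proof -
  define D where "D = (\<Sum>i<L. \<bar>x i\<bar>)"
  have "D \<ge> 0" unfolding D_def by (auto intro: sum_nonneg)
  have bound: "\<bar>x s\<bar> \<le> c ^ (s div L) * D" for s
  proof (induction s rule: less_induct)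
    case (less s)
    show ?case
    proof (cases "s < L")
      case True
      then have "\<bar>x s\<bar> \<le> D" unfolding D_def by (intro member_le_sum) auto
      then show ?thesis using True by simp
    next
      case False
      then have s_div: "s div L = Suc ((s - L) div L)"
        using \<open>L > 0\<close> by (simp add: div_if)
      have "\<bar>x t\<bar> \<le> c ^ ((s - L) div L) * D" if "s - L \<le> t" "t < s" for t
      proof -
        have "c ^ (t div L) \<le> c ^ ((s - L) div L)"
          using assms(1,2) div_le_mono[OF \<open>s - L \<le> t\<close>] by (intro power_decreasing) auto
        then show ?thesis
          using less.IH[OF \<open>t < s\<close>] mult_right_mono[OF _ \<open>D \<ge> 0\<close>] by fastforce
      qed
      then have "\<bar>x s\<bar> \<le> c * (c ^ ((s - L) div L) * D)"
        using False by (intro contraction) auto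
      then show ?thesis by (simp add: s_div)
    qed
  qed
  have "(\<lambda>s. c ^ (s div L)) \<longlonglongrightarrow> 0"
    using filterlim_compose[OF LIMSEQ_power_zero[of c] filterlim_at_top_div_const_nat[OF \<open>L > 0\<close>]]
      assms(1,2) by simp
  then have "(\<lambda>s. c ^ (s div L) * D) \<longlonglongrightarrow> 0"
    by (rule tendsto_mult_left_zero)
  then show ?thesis
    by (rule Lim_null_comparison[rotated]) (simp add: bound)
qed

lemma is_solution_tendsto_zero_if_bcoef_sum_lt_1:
  assumes "is_solution k a x" "k \<ge> 1" "(\<Sum>j<k. \<bar>bcoef k a m j\<bar>) < 1"
  shows "x \<longlonglongrightarrow> 0"
proof (rule tendsto_zero_if_window_contraction)
  fix s B
  assume "m + k \<le> s" and window: "\<And>t. s - (m + k) \<le> t \<Longrightarrow> t < s \<Longrightarrow> \<bar>x t\<bar> \<le> B"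
  define n where "n = s - m - 1"
  have "s = n + m + 1" "n \<ge> k - 1" using \<open>m + k \<le> s\<close> assms(2) by (simp_all add: n_def)
  have window_terms: "\<bar>x (n - j)\<bar> \<le> B" if "j < k" for j
    using that \<open>m + k \<le> s\<close> by (intro window) (auto simp: n_def)
  have "\<bar>x s\<bar> = \<bar>\<Sum>j<k. bcoef k a m j * x (n - j)\<bar>"
    using is_solution_bcoef[OF assms(1,2) \<open>n \<ge> k - 1\<close>, of m] \<open>s = n + m + 1\<close> by simp
  also have "\<dots> \<le> (\<Sum>j<k. \<bar>bcoef k a m j\<bar> * B)"
    by (intro order.trans[OF sum_abs] sum_mono) (simp add: abs_mult mult_left_mono window_terms)
  finally show "\<bar>x s\<bar> \<le> (\<Sum>j<k. \<bar>bcoef k a m j\<bar>) * B"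
    by (simp add: sum_distrib_right)
qed (use assms in \<open>auto intro: sum_nonneg\<close>)

lemma bcoef_tendsto_zero:
  assumes "\<forall>x. is_solution k a x \<longrightarrow> x \<longlonglongrightarrow> 0" "j < k"
  shows "(\<lambda>m. bcoef k a m j) \<longlonglongrightarrow> 0"
proof -
  define e where "e = recurrence_solution k a (\<lambda>i. if i = k - 1 - j then 1 else 0)"
  have e: "is_solution k a e"
    unfolding e_def by (rule is_solution_recurrence_solution)
  have "e (m + k) = bcoef k a m j" for m
  proof -
    have "e (m + k) = (\<Sum>i<k. bcoef k a m i * e (k - 1 - i))"
      using is_solution_bcoef[OF e, of "k - 1" m] assms(2) by (simp add: add.commute)
    also have "\<dots> = (\<Sum>i\<in>{j}. bcoef k a m i)"
      using assms(2)
      by (intro sum.mono_neutral_cong_right) (auto simp: e_def recurrence_solution_initial)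
    finally show ?thesis by simp
  qed
  moreover have "(\<lambda>m. e (m + k)) \<longlonglongrightarrow> 0"
    using LIMSEQ_ignore_initial_segment assms(1) e by blast
  ultimately show ?thesis by simp
qed

lemma bcoef_sum_lt_1_if_solutions_tendsto_zero:
  assumes "\<forall>x. is_solution k a x \<longrightarrow> x \<longlonglongrightarrow> 0"
  shows "\<exists>m. (\<Sum>j<k. \<bar>bcoef k a m j\<bar>) < 1"
proof -
  have "(\<lambda>m. \<Sum>j<k. \<bar>bcoef k a m j\<bar>) \<longlonglongrightarrow> (\<Sum>j<k. 0)"
    by (intro tendsto_sum tendsto_rabs_zero bcoef_tendsto_zero[OF assms]) simp
  then have "\<forall>\<^sub>F m in sequentially. (\<Sum>j<k. \<bar>bcoef k a m j\<bar>) < 1"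
    by (intro order_tendstoD(2)) auto
  then show ?thesis
    by (auto simp: eventually_sequentially)
qed

theorem mainTheorem7:
  fixes k :: nat and a :: "nat \<Rightarrow> real"
  assumes "k \<ge> 2" and "a 0 \<noteq> 0"
  shows "(\<forall>x. is_solution k a x \<longrightarrow> x \<longlonglongrightarrow> 0)
         \<longleftrightarrow> (\<exists>m::nat. l1_norm_poly (pm k a m) < 2)"
proof -
  have "k \<ge> 1" using assms(1) by simp
  then have "l1_norm_poly (pm k a m) < 2 \<longleftrightarrow> (\<Sum>j<k. \<bar>bcoef k a m j\<bar>) < 1" for m
    by (simp add: l1_norm_poly_pm)
  then show ?thesis
    using bcoef_sum_lt_1_if_solutions_tendsto_zero
      is_solution_tendsto_zero_if_bcoef_sum_lt_1[OF _ \<open>k \<ge> 1\<close>] by blast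
qed

end
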